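(* The polynomials $-5\Lambda^9_{1,1,1}M^{10}_1+56\Lambda^7_{1,1}K^{12}_{1,1}$ and $-5(M^{10}_1)^2+64M^8K^{12}_{1,1}$ are divisible by $f_1'$ in the polynomial ring of jet variables; let $X^{18}$ and $X^{19}$ be the respective quotients (they are bi-invariants of weights 18 and 19). Then $X^{18}$ is not a polynomial in the eleven bi-invariants $f_1',\Lambda^3,\Lambda^5_1,\Lambda^7_{1,1},M^8,\Lambda^9_{1,1,1},M^{10}_1,N^{12},K^{12}_{1,1},H^{14}_1,F^{16}_{1,1}$, and $X^{19}$ is not a polynomial in these eleven together with $X^{18}$.
   Context: $f_i^{(\lambda)}$ ($i\in\{1,2\}$, $\lambda\ge1$) are independent indeterminates; $D=\sum_{i,\lambda}f_i^{(\lambda+1)}\partial/\partial f_i^{(\lambda)}$; $\Delta^{\alpha,\beta}:=f_1^{(\alpha)}f_2^{(\beta)}-f_1^{(\beta)}f_2^{(\alpha)}$; for $P,Q$ of weights $m,n$, $[P,Q]:=n\,DP\cdot Q-m\,P\cdot DQ$ (superscripts are weights, $f_1'$ has weight 1). $\Lambda^3:=\Delta^{1,2}$; $\Lambda^5_1:=\Delta^{1,3}f_1'-3\Delta^{1,2}f_1''$; $\Lambda^7_{1,1}:=(\Delta^{1,4}+4\Delta^{2,3})(f_1')^2-10\Delta^{1,3}f_1'f_1''+15\Delta^{1,2}(f_1'')^2$; $M^8:=3\Delta^{1,4}\Delta^{1,2}+12\Delta^{2,3}\Delta^{1,2}-5(\Delta^{1,3})^2$; $\Lambda^9_{1,1,1}:=[\Lambda^7_{1,1},f_1']$;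 $M^{10}_1:=[M^8,f_1']$; $N^{12}:=[M^8,\Lambda^3]$; $K^{12}_{1,1}:=[\Lambda^7_{1,1},\Lambda^5_1]/f_1'$; $H^{14}_1:=[M^8,\Lambda^5_1]$; $F^{16}_{1,1}:=[M^8,\Lambda^7_{1,1}]$. A bi-invariant is a polynomial $P(j^\kappa f)$ with $P(j^\kappa(f\circ\phi))=(\phi')^mP((j^\kappa f)\circ\phi)$ for all holomorphic germs $f:(\mathbb C,0)\to\mathbb C^2$ and local biholomorphisms $\phi$, and invariant under $f_2^{(\lambda)}\mapsto f_2^{(\lambda)}+uf_1^{(\lambda)}$ for all $u\in\mathbb C$. *)

theory Defs
  imports Complex_Main "HOL-Library.Poly_Mapping"
begin

text \<open>Jet variables f_i^(l) are indexed by pairs (i,l); monomials are finitely supported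
  exponent maps, polynomials are finitely supported coefficient maps (complex coefficients).\<close>

type_synonym jmono = "(nat \<times> nat) \<Rightarrow>\<^sub>0 nat"
type_synonym jpoly = "jmono \<Rightarrow>\<^sub>0 complex"

definition monom :: "jmono \<Rightarrow> complex \<Rightarrow> jpoly" where
  "monom m c = Poly_Mapping.single m c"

definition const :: "complex \<Rightarrow> jpoly" where
  "const c = monom 0 c"

definition fv :: "nat \<Rightarrow> nat \<Rightarrow> jpoly" where
  "fv i l = monom (Poly_Mapping.single (i, l) 1) 1"

text \<open>total derivative D = sum f_i^(l+1) d/d f_i^(l) on a monomial, extended linearly\<close>
definition Dmon :: "jmono \<Rightarrow> jpoly" where
  "Dmon m = (\<Sum>v\<in>Poly_Mapping.keys m.
      const (of_nat (Poly_Mapping.lookup m v)) * monom (m - Poly_Mapping.single v 1) 1 * fv (fst v) (snd v + 1))"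

definition D :: "jpoly \<Rightarrow> jpoly" where
  "D p = (\<Sum>m\<in>Poly_Mapping.keys p. const (Poly_Mapping.lookup p m) * Dmon m)"

definition Delta :: "nat \<Rightarrow> nat \<Rightarrow> jpoly" where
  "Delta a b = fv 1 a * fv 2 b - fv 1 b * fv 2 a"

text \<open>bracket [P,Q] = n DP Q - m P DQ for P of weight m and Q of weight n\<close>
definition br :: "nat \<Rightarrow> jpoly \<Rightarrow> nat \<Rightarrow> jpoly \<Rightarrow> jpoly" where
  "br m P n Q = const (of_nat n) * D P * Q - const (of_nat m) * P * D Q"

definition pquot :: "jpoly \<Rightarrow> jpoly \<Rightarrow> jpoly" where
  "pquot p d = (THE q. p = d * q)"

definition f1' :: jpoly where "f1' = fv 1 1"
definition f1'' :: jpoly where "f1'' = fv 1 2"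

definition Lam3 :: jpoly where "Lam3 = Delta 1 2"
definition Lam5 :: jpoly where
  "Lam5 = Delta 1 3 * f1' - const 3 * Delta 1 2 * f1''"
definition Lam7 :: jpoly where
  "Lam7 = (Delta 1 4 + const 4 * Delta 2 3) * f1'^2 - const 10 * Delta 1 3 * f1' * f1''
          + const 15 * Delta 1 2 * f1''^2"
definition M8 :: jpoly where
  "M8 = const 3 * Delta 1 4 * Delta 1 2 + const 12 * Delta 2 3 * Delta 1 2 - const 5 * (Delta 1 3)^2"
definition Lam9 :: jpoly where "Lam9 = br 7 Lam7 1 f1'"
definition M10 :: jpoly where "M10 = br 8 M8 1 f1'"
definition N12 :: jpoly where "N12 = br 8 M8 3 Lam3"
definition K12 :: jpoly where "K12 = pquot (br 7 Lam7 5 Lam5) f1'"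
definition H14 :: jpoly where "H14 = br 8 M8 5 Lam5"
definition F16 :: jpoly where "F16 = br 8 M8 7 Lam7"

inductive_set polys_in :: "jpoly set \<Rightarrow> jpoly set" for G where
  const: "const c \<in> polys_in G"
| gen: "g \<in> G \<Longrightarrow> g \<in> polys_in G"
| add: "p \<in> polys_in G \<Longrightarrow> q \<in> polys_in G \<Longrightarrow> p + q \<in> polys_in G"
| mult: "p \<in> polys_in G \<Longrightarrow> q \<in> polys_in G \<Longrightarrow> p * q \<in> polys_in G"

definition A18 :: jpoly where "A18 = - const 5 * Lam9 * M10 + const 56 * Lam7 * K12"
definition A19 :: jpoly where "A19 = - const 5 * M10^2 + const 64 * M8 * K12"
definition X18 :: jpoly where "X18 = pquot A18 f1'"
definition X19 :: jpoly where "X19 = pquot A19 f1'"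

definition eleven :: "jpoly set" where
  "eleven = {f1', Lam3, Lam5, Lam7, M8, Lam9, M10, N12, K12, H14, F16}"

end

theory Submission
  imports Defs "HOL-Library.Product_Lexorder" "HOL-Library.Product_Plus"
begin

(* The jet polynomial ring is graded by the multidegree
     mdeg = (degree in the f_1 variables, degree in the f_2 variables, weight),
   and the total derivative D preserves both degrees and raises the weight by one.  Hence all
   eleven generators are homogeneous, of multidegrees (1,0,1), (1,1,3), (2,1,5), (3,1,7),
   (2,2,8), (4,1,9), (3,2,10), (3,3,12), (4,2,12), (4,3,14), (5,3,16).  Each of them satisfies
   w <= 2(d1+d2), and on the line w = 2(d1+d2) also d1 <= 2 d2 with d2 even when d1 = 2 d2; both
   conditions are closed under addition, so every monomial of a polynomial in the generators
   satisfies them.  After computing the quotients X18 and X19 explicitly (the division by f_1'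
   is an identity of polynomials), X18 is a nonzero homogeneous polynomial of multidegree
   (6,3,18), which violates the refined condition, and X19 is nonzero of multidegree (5,4,19),
   which violates w <= 2(d1+d2) while X18 satisfies it. *)

lemma const_0 [simp]: "const 0 = 0" by (simp add: const_def monom_def)
lemma const_1 [simp]: "const 1 = 1" by (simp add: const_def monom_def)
lemma const_numeral [simp]: "const (numeral k) = numeral k" by (simp add: const_def monom_def)
lemma const_add: "const (a + b) = const a + const b" by (simp add: const_def monom_def single_add)
lemma const_mult: "const (a * b) = const a * const b" by (simp add: const_def monom_def mult_single)

lemma monom_mult: "monom a c * monom b d = monom (a + b) (c * d)" by (simp add: monom_def mult_single)
lemma monom_eq_const_mult: "monom m c = const c * monom m 1" by (simp add: const_def monom_mult)

lemma poly_mapping_expansion: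
  "p = (\<Sum>m\<in>Poly_Mapping.keys p. Poly_Mapping.single m (Poly_Mapping.lookup p m))"
  by (rule poly_mapping_eqI) (simp add: lookup_sum lookup_single when_def in_keys_iff)

lemma additive_on_expansion:
  fixes L :: "('a \<Rightarrow>\<^sub>0 'c::comm_monoid_add) \<Rightarrow> 'b::ab_group_add"
  assumes add: "\<And>p q. L (p + q) = L p + L q"
  shows "L p = (\<Sum>m\<in>Poly_Mapping.keys p. L (Poly_Mapping.single m (Poly_Mapping.lookup p m)))"
proof -
  have "L 0 = 0" using add[of 0 0] by simp
  then have "L (\<Sum>m\<in>Poly_Mapping.keys p. Poly_Mapping.single m (Poly_Mapping.lookup p m))
      = (\<Sum>m\<in>Poly_Mapping.keys p. L (Poly_Mapping.single m (Poly_Mapping.lookup p m)))"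
    using sum_comp_morphism[of L "\<lambda>m. Poly_Mapping.single m (Poly_Mapping.lookup p m)"] add
    by (simp add: o_def)
  then show ?thesis by (simp only: poly_mapping_expansion[symmetric])
qed

lemma additive_eq_on_singles:
  fixes L L' :: "('a \<Rightarrow>\<^sub>0 'c::comm_monoid_add) \<Rightarrow> 'b::ab_group_add"
  assumes add: "\<And>p q. L (p + q) = L p + L q" and add': "\<And>p q. L' (p + q) = L' p + L' q"
    and singles: "\<And>m c. L (Poly_Mapping.single m c) = L' (Poly_Mapping.single m c)"
  shows "L p = L' p"
  unfolding additive_on_expansion[OF add, of p] additive_on_expansion[OF add', of p] singles ..

lemma biadditive_eq_on_singles:
  fixes B B' :: "('a \<Rightarrow>\<^sub>0 'c::comm_monoid_add) \<Rightarrow> ('a \<Rightarrow>\<^sub>0 'c) \<Rightarrow> 'b::ab_group_add"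
  assumes "\<And>p q r. B (p + q) r = B p r + B q r" "\<And>p q r. B p (q + r) = B p q + B p r"
    and "\<And>p q r. B' (p + q) r = B' p r + B' q r" "\<And>p q r. B' p (q + r) = B' p q + B' p r"
    and singles: "\<And>a c b d. B (Poly_Mapping.single a c) (Poly_Mapping.single b d)
                              = B' (Poly_Mapping.single a c) (Poly_Mapping.single b d)"
  shows "B p q = B' p q"
proof (rule additive_eq_on_singles[where L = "\<lambda>p. B p q" and L' = "\<lambda>p. B' p q"])
  fix a c
  show "B (Poly_Mapping.single a c) q = B' (Poly_Mapping.single a c) q"
    by (rule additive_eq_on_singles[where L = "B (Poly_Mapping.single a c)"]) (use assms in auto)
qed (use assms in auto)

lemma D_add: "D (p + q) = D p + D q"
  unfolding D_def by (rule setsum_keys_plus_distrib) (simp_all add: const_add distrib_right)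

lemma D_monom: "D (monom m c) = const c * Dmon m"
  by (cases "c = 0") (simp_all add: D_def monom_def)

lemma Dmon_superset:
  assumes "finite S" "Poly_Mapping.keys m \<subseteq> S"
  shows "Dmon m = (\<Sum>v\<in>S. const (of_nat (Poly_Mapping.lookup m v))
                              * monom (m - Poly_Mapping.single v 1) 1 * fv (fst v) (snd v + 1))"
  unfolding Dmon_def by (rule sum.mono_neutral_left) (use assms in \<open>auto simp: in_keys_iff\<close>)

lemma minus_single_add_left:
  assumes "Poly_Mapping.lookup a v \<noteq> 0"
  shows "a + b - Poly_Mapping.single v (1::nat) = (a - Poly_Mapping.single v 1) + b"
  by (rule poly_mapping_eqI) (use assms in \<open>auto simp: lookup_add lookup_minus lookup_single when_def\<close>)

lemma lowered_monom_add:
  "const (of_nat (Poly_Mapping.lookup a v)) * monom (a + b - Poly_Mapping.single v 1) 1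
     = const (of_nat (Poly_Mapping.lookup a v)) * monom (a - Poly_Mapping.single v 1) 1 * monom b 1"
  by (cases "Poly_Mapping.lookup a v = 0")
     (simp, subst minus_single_add_left, assumption, simp add: monom_mult mult.assoc)

lemma Dmon_add: "Dmon (a + b) = Dmon a * monom b 1 + monom a 1 * Dmon b"
proof -
  let ?S = "Poly_Mapping.keys a \<union> Poly_Mapping.keys b"
  let ?t = "\<lambda>m v. const (of_nat (Poly_Mapping.lookup m v))
                   * monom (m - Poly_Mapping.single v 1) 1 * fv (fst v) (snd v + 1)"
  have term_split: "?t (a + b) v = ?t a v * monom b 1 + monom a 1 * ?t b v" for v
  proof -
    have "?t (a + b) v = (const (of_nat (Poly_Mapping.lookup a v)) * monom (a + b - Poly_Mapping.single v 1) 1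
        + const (of_nat (Poly_Mapping.lookup b v)) * monom (b + a - Poly_Mapping.single v 1) 1)
        * fv (fst v) (snd v + 1)"
      by (simp add: lookup_add const_add distrib_right add.commute)
    then show ?thesis
      unfolding lowered_monom_add by (simp add: algebra_simps)
  qed
  have "Dmon (a + b) = (\<Sum>v\<in>?S. ?t (a + b) v)"
    by (rule Dmon_superset) (auto dest: set_mp[OF keys_add])
  also have "\<dots> = (\<Sum>v\<in>?S. ?t a v) * monom b 1 + monom a 1 * (\<Sum>v\<in>?S. ?t b v)"
    unfolding term_split by (simp add: sum.distrib sum_distrib_left sum_distrib_right)
  also have "\<dots> = Dmon a * monom b 1 + monom a 1 * Dmon b"
    using Dmon_superset[of ?S a] Dmon_superset[of ?S b] by simp
  finally show ?thesis .
qed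

lemma D_monom_mult: "D (monom a c * monom b d) = D (monom a c) * monom b d + monom a c * D (monom b d)"
  unfolding monom_mult D_monom Dmon_add
  by (subst (2 4) monom_eq_const_mult) (simp add: const_mult algebra_simps)

lemma D_mult: "D (p * q) = D p * q + p * D q"
  by (rule biadditive_eq_on_singles[where B = "\<lambda>p q. D (p * q)" and B' = "\<lambda>p q. D p * q + p * D q"])
     (simp_all add: D_add algebra_simps D_monom_mult[unfolded monom_def])

lemma D_const [simp]: "D (const c) = 0"
  by (simp add: const_def D_monom Dmon_def)

lemma D_fv [simp]: "D (fv i l) = fv i (l + 1)"
proof -
  have "D (fv i l) = Dmon (Poly_Mapping.single (i, l) 1)"
    unfolding fv_def D_monom by simp
  then show ?thesis by (simp add: Dmon_def monom_def fv_def)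
qed

lemma D_0 [simp]: "D 0 = 0" using D_const[of 0] by simp
lemma D_1 [simp]: "D 1 = 0" using D_const[of 1] by simp
lemma D_numeral [simp]: "D (numeral k) = 0" using D_const[of "numeral k"] by simp
lemma D_uminus [simp]: "D (- p) = - D p" using D_add[of "- p" p] by (simp add: eq_neg_iff_add_eq_0)
lemma D_diff [simp]: "D (p - q) = D p - D q" using D_add[of p "- q"] by simp
lemma D_power2: "D (p ^ 2) = 2 * p * D p" by (simp add: power2_eq_square D_mult)

lemma D_fv_numeral: "D (fv i 1) = fv i 2" "D (fv i 2) = fv i 3" "D (fv i 3) = fv i 4"
  "D (fv i 4) = fv i 5" "D (fv i 5) = fv i 6"
  by (simp_all add: numeral_eq_Suc)

lemmas D_expand = D_mult D_add D_diff D_power2 D_numeral D_uminus D_1 D_fv_numeral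

definition mon :: "((nat \<times> nat) \<Rightarrow> complex) \<Rightarrow> jmono \<Rightarrow> complex" where
  "mon x m = (\<Prod>v\<in>Poly_Mapping.keys m. x v ^ Poly_Mapping.lookup m v)"

definition ev :: "((nat \<times> nat) \<Rightarrow> complex) \<Rightarrow> jpoly \<Rightarrow> complex" where
  "ev x p = (\<Sum>m\<in>Poly_Mapping.keys p. Poly_Mapping.lookup p m * mon x m)"

lemma mon_superset:
  "finite S \<Longrightarrow> Poly_Mapping.keys m \<subseteq> S \<Longrightarrow> mon x m = (\<Prod>v\<in>S. x v ^ Poly_Mapping.lookup m v)"
  unfolding mon_def by (rule prod.mono_neutral_left) (auto simp: in_keys_iff)

lemma mon_add: "mon x (a + b) = mon x a * mon x b"
proof -
  let ?S = "Poly_Mapping.keys a \<union> Poly_Mapping.keys b"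
  have "mon x (a + b) = (\<Prod>v\<in>?S. x v ^ Poly_Mapping.lookup (a + b) v)"
    by (rule mon_superset) (auto dest: set_mp[OF keys_add])
  also have "\<dots> = (\<Prod>v\<in>?S. x v ^ Poly_Mapping.lookup a v) * (\<Prod>v\<in>?S. x v ^ Poly_Mapping.lookup b v)"
    by (simp add: lookup_add power_add prod.distrib)
  also have "\<dots> = mon x a * mon x b"
    using mon_superset[of ?S a] mon_superset[of ?S b] by simp
  finally show ?thesis .
qed

lemma ev_add [simp]: "ev x (p + q) = ev x p + ev x q"
  unfolding ev_def by (rule setsum_keys_plus_distrib) (simp_all add: distrib_right)

lemma ev_monom: "ev x (monom m c) = c * mon x m"
  by (cases "c = 0") (simp_all add: ev_def monom_def)

lemma ev_mult [simp]: "ev x (p * q) = ev x p * ev x q"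
  by (rule biadditive_eq_on_singles[where B = "\<lambda>p q. ev x (p * q)" and B' = "\<lambda>p q. ev x p * ev x q"])
     (simp_all add: algebra_simps monom_mult[unfolded monom_def] ev_monom[unfolded monom_def] mon_add)

lemma ev_0 [simp]: "ev x 0 = 0" by (simp add: ev_def)
lemma ev_const [simp]: "ev x (const c) = c" by (simp add: const_def ev_monom mon_def)
lemma ev_1 [simp]: "ev x 1 = 1" using ev_const[of x 1] by simp
lemma ev_numeral [simp]: "ev x (numeral k) = numeral k" using ev_const[of x "numeral k"] by simp
lemma ev_uminus [simp]: "ev x (- p) = - ev x p" using ev_add[of x "- p" p] by (simp add: eq_neg_iff_add_eq_0)
lemma ev_diff [simp]: "ev x (p - q) = ev x p - ev x q" using ev_add[of x p "- q"] by simp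
lemma ev_power [simp]: "ev x (p ^ n) = ev x p ^ n" by (induction n) auto
lemma ev_fv [simp]: "ev x (fv i l) = x (i, l)" by (simp add: fv_def ev_monom mon_def)

definition wt :: "((nat \<times> nat) \<Rightarrow> nat) \<Rightarrow> jmono \<Rightarrow> nat" where
  "wt c m = (\<Sum>v\<in>Poly_Mapping.keys m. Poly_Mapping.lookup m v * c v)"

lemma wt_add: "wt c (a + b) = wt c a + wt c b"
  unfolding wt_def by (rule setsum_keys_plus_distrib) (auto simp: algebra_simps)

lemma wt_single [simp]: "wt c (Poly_Mapping.single v n) = n * c v"
  by (cases "n = 0") (simp_all add: wt_def)

lemma wt_0 [simp]: "wt c 0 = 0" by (simp add: wt_def)

definition mdeg :: "jmono \<Rightarrow> nat \<times> nat \<times> nat" where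
  "mdeg m = (wt (\<lambda>v. if fst v = 1 then 1 else 0) m, wt (\<lambda>v. if fst v = 2 then 1 else 0) m, wt snd m)"

lemma mdeg_add: "mdeg (a + b) = mdeg a + mdeg b"
  by (simp add: mdeg_def wt_add)

lemma mdeg_0 [simp]: "mdeg 0 = 0"
  by (simp add: mdeg_def zero_prod_def)

lemma mdeg_single [simp]:
  "mdeg (Poly_Mapping.single (i, l) n) = (if i = 1 then n else 0, if i = 2 then n else 0, n * l)"
  by (simp add: mdeg_def)

lemma mdeg_lower:
  assumes "Poly_Mapping.lookup m (i, l) \<noteq> 0"
  shows "mdeg (m - Poly_Mapping.single (i, l) 1) + mdeg (Poly_Mapping.single (i, l + 1) 1)
       = mdeg m + (0, 0, 1)"
proof -
  have "m = (m - Poly_Mapping.single (i, l) 1) + Poly_Mapping.single (i, l) 1"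
    by (rule poly_mapping_eqI) (use assms in \<open>auto simp: lookup_add lookup_minus lookup_single when_def\<close>)
  then have "mdeg m = mdeg (m - Poly_Mapping.single (i, l) 1) + mdeg (Poly_Mapping.single (i, l) 1)"
    by (metis mdeg_add)
  then show ?thesis by (cases "mdeg (m - Poly_Mapping.single (i, l) 1)") simp
qed

definition homogeneous :: "nat \<times> nat \<times> nat \<Rightarrow> jpoly \<Rightarrow> bool" where
  "homogeneous d p \<longleftrightarrow> (\<forall>m\<in>Poly_Mapping.keys p. mdeg m = d)"

lemma homogeneous_zero: "homogeneous d 0" by (simp add: homogeneous_def)

lemma homogeneous_cong: "homogeneous d p \<Longrightarrow> d = e \<Longrightarrow> homogeneous e p" by simp

lemma homogeneous_add: "homogeneous d p \<Longrightarrow> homogeneous d q \<Longrightarrow> homogeneous d (p + q)"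
  unfolding homogeneous_def by (auto dest: set_mp[OF keys_add])

lemma homogeneous_uminus: "homogeneous d p \<Longrightarrow> homogeneous d (- p)"
  unfolding homogeneous_def by (simp add: in_keys_iff)

lemma homogeneous_diff: "homogeneous d p \<Longrightarrow> homogeneous d q \<Longrightarrow> homogeneous d (p - q)"
  using homogeneous_add[of d p "- q"] homogeneous_uminus[of d q] by simp

lemma homogeneous_mult: "homogeneous d p \<Longrightarrow> homogeneous e q \<Longrightarrow> homogeneous (d + e) (p * q)"
  unfolding homogeneous_def using keys_mult[of p q] by (auto simp: mdeg_add)

lemma homogeneous_power2: "homogeneous d p \<Longrightarrow> homogeneous (d + d) (p ^ 2)"
  unfolding power2_eq_square by (rule homogeneous_mult)

lemma homogeneous_sum: "(\<And>a. a \<in> A \<Longrightarrow> homogeneous d (f a)) \<Longrightarrow> homogeneous d (sum f A)"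
  by (induction A rule: infinite_finite_induct) (auto intro: homogeneous_zero homogeneous_add)

lemma homogeneous_monom: "homogeneous (mdeg m) (monom m c)"
  unfolding homogeneous_def by (simp add: monom_def)

lemma homogeneous_const: "homogeneous 0 (const c)"
  using homogeneous_monom[of 0 c] by (simp add: const_def)

lemma homogeneous_fv1: "homogeneous (1, 0, l) (fv 1 l)"
  using homogeneous_monom[of "Poly_Mapping.single (1, l) 1" 1] by (simp add: fv_def mdeg_single)

lemma homogeneous_fv2: "homogeneous (0, 1, l) (fv 2 l)"
  using homogeneous_monom[of "Poly_Mapping.single (2, l) 1" 1] by (simp add: fv_def mdeg_single)

lemma homogeneous_D:
  assumes "homogeneous d p"
  shows "homogeneous (d + (0, 0, 1)) (D p)"
  unfolding D_def
proof (intro homogeneous_sum)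
  fix m assume "m \<in> Poly_Mapping.keys p"
  with assms have "mdeg m = d" by (simp add: homogeneous_def)
  have "homogeneous (d + (0, 0, 1)) (Dmon m)"
    unfolding Dmon_def
  proof (intro homogeneous_sum, clarify)
    fix i l assume "(i, l) \<in> Poly_Mapping.keys m"
    let ?m' = "m - Poly_Mapping.single (i, l) 1" and ?v' = "Poly_Mapping.single (i, l + 1) 1"
    have deg: "mdeg ?m' + mdeg ?v' = d + (0, 0, 1)"
      using mdeg_lower[of m i l] \<open>(i, l) \<in> _\<close> \<open>mdeg m = d\<close> by (simp add: in_keys_iff)
    have "homogeneous (0 + mdeg ?m' + mdeg ?v')
        (const (of_nat (Poly_Mapping.lookup m (i, l))) * monom ?m' 1 * monom ?v' 1)"
      by (intro homogeneous_mult homogeneous_const homogeneous_monom)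
    then show "homogeneous (d + (0, 0, 1)) (const (of_nat (Poly_Mapping.lookup m (i, l)))
                 * monom ?m' 1 * fv (fst (i, l)) (snd (i, l) + 1))"
      unfolding deg[symmetric] fv_def by simp
  qed
  then show "homogeneous (d + (0, 0, 1)) (const (Poly_Mapping.lookup p m) * Dmon m)"
    using homogeneous_mult[OF homogeneous_const] by fastforce
qed

lemma homogeneous_br:
  assumes "homogeneous (a1, a2, m) P" "homogeneous (b1, b2, n) Q"
  shows "homogeneous (a1 + b1, a2 + b2, m + n + 1) (br m P n Q)"
proof -
  have "homogeneous (0 + ((a1, a2, m) + (0, 0, 1)) + (b1, b2, n)) (const (of_nat n) * D P * Q)"
       "homogeneous (0 + (a1, a2, m) + ((b1, b2, n) + (0, 0, 1))) (const (of_nat m) * P * D Q)"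
    by (intro homogeneous_mult homogeneous_const homogeneous_D assms)+
  then show ?thesis
    unfolding br_def by (intro homogeneous_diff) (simp_all add: homogeneous_cong)
qed

(* Multiplication by a monomial shifts every monomial, so a quotient by a monomial inherits
   homogeneity. *)
lemma lookup_monom_mult: "Poly_Mapping.lookup (monom a 1 * q) (a + m) = Poly_Mapping.lookup q m"
proof -
  have "monom a 1 * q = (\<Sum>n\<in>Poly_Mapping.keys q. monom (a + n) (Poly_Mapping.lookup q n))"
    by (subst poly_mapping_expansion[of q]) (simp add: sum_distrib_left mult_single monom_def)
  then show ?thesis
    by (simp add: lookup_sum monom_def lookup_single when_def in_keys_iff)
qed

lemma homogeneous_monom_quotient:
  assumes "homogeneous (mdeg a + d) (monom a 1 * q)"
  shows "homogeneous d q"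
  unfolding homogeneous_def
proof
  fix m assume "m \<in> Poly_Mapping.keys q"
  then have "a + m \<in> Poly_Mapping.keys (monom a 1 * q)"
    by (simp add: in_keys_iff lookup_monom_mult)
  with assms have "mdeg a + mdeg m = mdeg a + d" unfolding homogeneous_def mdeg_add[symmetric] by blast
  then show "mdeg m = d" by simp
qed

lemma polys_in_mdeg:
  assumes "p \<in> polys_in G"
    and zero: "0 \<in> S" and plus: "\<And>x y. x \<in> S \<Longrightarrow> y \<in> S \<Longrightarrow> x + y \<in> S"
    and gens: "\<And>g. g \<in> G \<Longrightarrow> \<exists>d\<in>S. homogeneous d g"
  shows "\<forall>m\<in>Poly_Mapping.keys p. mdeg m \<in> S"
  using assms(1)
proof induction
  case (const c)
  then show ?case using zero by (simp add: const_def monom_def)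
next
  case (gen g)
  then obtain d where "d \<in> S" "homogeneous d g" using gens by blast
  then show ?case by (metis homogeneous_def)
next
  case (add p q)
  then show ?case by (auto dest: set_mp[OF keys_add])
next
  case (mult p q)
  show ?case
  proof
    fix m assume "m \<in> Poly_Mapping.keys (p * q)"
    then obtain a b where "a \<in> Poly_Mapping.keys p" "b \<in> Poly_Mapping.keys q" "m = a + b"
      using keys_mult[of p q] by blast
    then show "mdeg m \<in> S" using mult.IH plus by (simp add: mdeg_add)
  qed
qed

lemma homogeneous_not_in_polys_in:
  assumes "homogeneous d x" "x \<noteq> 0" "d \<notin> S"
    and "0 \<in> S" "\<And>x y. x \<in> S \<Longrightarrow> y \<in> S \<Longrightarrow> x + y \<in> S"
    and "\<And>g. g \<in> G \<Longrightarrow> \<exists>d\<in>S. homogeneous d g"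
  shows "x \<notin> polys_in G"
proof
  assume "x \<in> polys_in G"
  then have "\<forall>m\<in>Poly_Mapping.keys x. mdeg m \<in> S"
    using polys_in_mdeg assms(4-6) by blast
  moreover obtain m where "m \<in> Poly_Mapping.keys x"
    using \<open>x \<noteq> 0\<close> by (metis ex_in_conv keys_eq_empty)
  ultimately show False using assms(1,3) by (auto simp: homogeneous_def)
qed

(* The explicit quotients by f1'.  Exact division is unique because the jet polynomial ring is
   an integral domain (the monomials carry a compatible linear order). *)

lemma pquot_eq: "d \<noteq> 0 \<Longrightarrow> p = d * q \<Longrightarrow> pquot p d = q"
  unfolding pquot_def by (auto intro!: the_equality)

lemma f1'_nonzero: "f1' \<noteq> 0"
proof
  assume "f1' = 0"
  then have "Poly_Mapping.lookup f1' (Poly_Mapping.single (1, 1) 1) = 0" by simp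
  then show False by (simp add: f1'_def fv_def monom_def)
qed

lemma D_f1': "D f1' = f1''" unfolding f1'_def f1''_def by (rule D_fv_numeral(1))

(* The bracket [Lam7, Lam5] equals f1' * (5 M8 f1''^2 + f1' R11), where R11 is the
   following explicit polynomial of bidegree (3,2) and weight 11. *)

definition R11 :: jpoly where
  "R11 =
   - 50 * fv 1 3 ^ 3 * fv 2 1 ^ 2 + 65 * fv 1 2 * fv 1 3 * fv 1 4 * fv 2 1 ^ 2
   + 110 * fv 1 2 * fv 1 3 ^ 2 * fv 2 1 * fv 2 2 - 15 * fv 1 2 ^ 2 * fv 1 5 * fv 2 1 ^ 2
   - 75 * fv 1 2 ^ 2 * fv 1 4 * fv 2 1 * fv 2 2 - 110 * fv 1 2 ^ 2 * fv 1 3 * fv 2 1 * fv 2 3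
   + 75 * fv 1 2 ^ 3 * fv 2 1 * fv 2 4 - 7 * fv 1 1 * fv 1 4 ^ 2 * fv 2 1 ^ 2
   + 5 * fv 1 1 * fv 1 3 * fv 1 5 * fv 2 1 ^ 2 - 31 * fv 1 1 * fv 1 3 * fv 1 4 * fv 2 1 * fv 2 2
   - 112 * fv 1 1 * fv 1 3 ^ 2 * fv 2 2 ^ 2 + 100 * fv 1 1 * fv 1 3 ^ 2 * fv 2 1 * fv 2 3
   + 15 * fv 1 1 * fv 1 2 * fv 1 5 * fv 2 1 * fv 2 2
   + 75 * fv 1 1 * fv 1 2 * fv 1 4 * fv 2 2 ^ 2 - 9 * fv 1 1 * fv 1 2 * fv 1 4 * fv 2 1 * fv 2 3
   + 114 * fv 1 1 * fv 1 2 * fv 1 3 * fv 2 2 * fv 2 3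
   - 90 * fv 1 1 * fv 1 2 * fv 1 3 * fv 2 1 * fv 2 4 - 2 * fv 1 1 * fv 1 2 ^ 2 * fv 2 3 ^ 2
   - 75 * fv 1 1 * fv 1 2 ^ 2 * fv 2 2 * fv 2 4 + 15 * fv 1 1 * fv 1 2 ^ 2 * fv 2 1 * fv 2 5
   - 5 * fv 1 1 ^ 2 * fv 1 5 * fv 2 1 * fv 2 3 - 25 * fv 1 1 ^ 2 * fv 1 4 * fv 2 2 * fv 2 3
   + 14 * fv 1 1 ^ 2 * fv 1 4 * fv 2 1 * fv 2 4 - 50 * fv 1 1 ^ 2 * fv 1 3 * fv 2 3 ^ 2
   + 56 * fv 1 1 ^ 2 * fv 1 3 * fv 2 2 * fv 2 4 - 5 * fv 1 1 ^ 2 * fv 1 3 * fv 2 1 * fv 2 5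
   + 34 * fv 1 1 ^ 2 * fv 1 2 * fv 2 3 * fv 2 4 - 15 * fv 1 1 ^ 2 * fv 1 2 * fv 2 2 * fv 2 5
   - 7 * fv 1 1 ^ 3 * fv 2 4 ^ 2 + 5 * fv 1 1 ^ 3 * fv 2 3 * fv 2 5"

lemma bracket_Lam7_Lam5: "br 7 Lam7 5 Lam5 = f1' * (5 * M8 * f1'' ^ 2 + f1' * R11)"
  unfolding br_def R11_def Lam7_def Lam5_def M8_def Delta_def f1'_def f1''_def
  by (simp only: D_expand of_nat_numeral const_numeral) algebra

lemma K12_formula: "K12 = 5 * M8 * f1'' ^ 2 + f1' * R11"
  unfolding K12_def by (rule pquot_eq[OF f1'_nonzero bracket_Lam7_Lam5])

lemma A18_factorization:
  "A18 = f1' * (- 5 * D Lam7 * D M8 * f1' + 40 * D Lam7 * M8 * f1'' + 35 * Lam7 * f1'' * D M8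
                + 56 * Lam7 * R11)"
  unfolding A18_def Lam9_def M10_def br_def K12_formula
  by (simp only: D_f1' of_nat_numeral const_numeral of_nat_1 const_1) algebra

lemma A19_factorization:
  "A19 = f1' * (- 5 * (D M8) ^ 2 * f1' + 80 * D M8 * M8 * f1'' + 64 * M8 * R11)"
  unfolding A19_def M10_def br_def K12_formula
  by (simp only: D_f1' of_nat_numeral const_numeral of_nat_1 const_1) algebra

lemma X18_formula:
  "X18 = - 5 * D Lam7 * D M8 * f1' + 40 * D Lam7 * M8 * f1'' + 35 * Lam7 * f1'' * D M8 + 56 * Lam7 * R11"
  unfolding X18_def by (rule pquot_eq[OF f1'_nonzero A18_factorization])

lemma X19_formula: "X19 = - 5 * (D M8) ^ 2 * f1' + 80 * D M8 * M8 * f1'' + 64 * M8 * R11"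
  unfolding X19_def by (rule pquot_eq[OF f1'_nonzero A19_factorization])

definition witness_pt :: "nat \<times> nat \<Rightarrow> complex" where
  "witness_pt v = (if v \<in> {(1, 1), (2, 2), (2, 5)} then 1 else 0)"

lemma X18_nonzero: "X18 \<noteq> 0"
proof -
  have "ev witness_pt X18 = - 15"
    unfolding X18_formula R11_def Lam7_def M8_def Delta_def f1'_def f1''_def
    by (simp add: D_expand witness_pt_def)
  then show ?thesis by auto
qed

lemma X19_nonzero: "X19 \<noteq> 0"
proof -
  have "ev witness_pt X19 = - 45"
    unfolding X19_formula R11_def M8_def Delta_def f1'_def f1''_def
    by (simp add: D_expand witness_pt_def)
  then show ?thesis by auto
qed

(* The closure rules below carry the degree constraints as
   separate premises, so that together with homogeneous_cong they compute the multidegree of an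
   explicit expression by rule application and arithmetic. *)

lemma homogeneous_add_check:
  "homogeneous d p \<Longrightarrow> homogeneous e q \<Longrightarrow> e = d \<Longrightarrow> homogeneous d (p + q)"
  by (simp add: homogeneous_add)

lemma homogeneous_diff_check:
  "homogeneous d p \<Longrightarrow> homogeneous e q \<Longrightarrow> e = d \<Longrightarrow> homogeneous d (p - q)"
  by (simp add: homogeneous_diff)

lemma homogeneous_Delta: "homogeneous (1, 1, a + b) (Delta a b)"
  unfolding Delta_def
  by (rule homogeneous_diff_check homogeneous_cong[OF homogeneous_mult]
        homogeneous_fv1 homogeneous_fv2 | simp)+

lemma homogeneous_f1': "homogeneous (1, 0, 1) f1'" unfolding f1'_def by (rule homogeneous_fv1)
lemma homogeneous_f1'': "homogeneous (1, 0, 2) f1''" unfolding f1''_def by (rule homogeneous_fv1)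

lemmas homogeneous_rules = homogeneous_add_check homogeneous_diff_check homogeneous_uminus
  homogeneous_mult homogeneous_power2 homogeneous_const
  homogeneous_Delta homogeneous_f1' homogeneous_f1''

lemma homogeneous_f1'_quotient: "homogeneous (d + (1, 0, 1)) (f1' * q) \<Longrightarrow> homogeneous d q"
  using homogeneous_monom_quotient[of "Poly_Mapping.single (1, 1) 1" d q]
  by (simp add: f1'_def fv_def add.commute)

lemma homogeneous_Lam3: "homogeneous (1, 1, 3) Lam3"
  unfolding Lam3_def using homogeneous_Delta[of 1 2] by (simp add: numeral_eq_Suc)
lemma homogeneous_Lam5: "homogeneous (2, 1, 5) Lam5"
  unfolding Lam5_def by (rule homogeneous_cong, (rule homogeneous_rules | simp)+)
lemma homogeneous_Lam7: "homogeneous (3, 1, 7) Lam7"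
  unfolding Lam7_def by (rule homogeneous_cong, (rule homogeneous_rules | simp)+)
lemma homogeneous_M8: "homogeneous (2, 2, 8) M8"
  unfolding M8_def by (rule homogeneous_cong, (rule homogeneous_rules | simp)+)
lemma homogeneous_Lam9: "homogeneous (4, 1, 9) Lam9"
  unfolding Lam9_def using homogeneous_br[OF homogeneous_Lam7 homogeneous_f1'] by simp
lemma homogeneous_M10: "homogeneous (3, 2, 10) M10"
  unfolding M10_def using homogeneous_br[OF homogeneous_M8 homogeneous_f1'] by simp
lemma homogeneous_N12: "homogeneous (3, 3, 12) N12"
  unfolding N12_def using homogeneous_br[OF homogeneous_M8 homogeneous_Lam3] by simp
lemma homogeneous_H14: "homogeneous (4, 3, 14) H14"
  unfolding H14_def using homogeneous_br[OF homogeneous_M8 homogeneous_Lam5] by simp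
lemma homogeneous_F16: "homogeneous (5, 3, 16) F16"
  unfolding F16_def using homogeneous_br[OF homogeneous_M8 homogeneous_Lam7] by simp

lemma homogeneous_K12: "homogeneous (4, 2, 12) K12"
proof (rule homogeneous_f1'_quotient)
  have "f1' * K12 = br 7 Lam7 5 Lam5" by (simp add: bracket_Lam7_Lam5 K12_formula)
  then show "homogeneous ((4, 2, 12) + (1, 0, 1)) (f1' * K12)"
    using homogeneous_br[OF homogeneous_Lam7 homogeneous_Lam5] by (simp add: numeral_eq_Suc)
qed

lemma homogeneous_X18: "homogeneous (6, 3, 18) X18"
proof (rule homogeneous_f1'_quotient)
  have "homogeneous (7, 3, 19) A18"
    unfolding A18_def
    by (rule homogeneous_cong, (rule homogeneous_rules homogeneous_Lam9 homogeneous_M10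
          homogeneous_Lam7 homogeneous_K12 | simp)+)
  then show "homogeneous ((6, 3, 18) + (1, 0, 1)) (f1' * X18)"
    by (simp add: A18_factorization X18_formula)
qed

lemma homogeneous_X19: "homogeneous (5, 4, 19) X19"
proof (rule homogeneous_f1'_quotient)
  have "homogeneous (6, 4, 20) A19"
    unfolding A19_def
    by (rule homogeneous_cong, (rule homogeneous_rules homogeneous_M10 homogeneous_M8 homogeneous_K12 | simp)+)
  then show "homogeneous ((5, 4, 19) + (1, 0, 1)) (f1' * X19)"
    by (simp add: A19_factorization X19_formula)
qed

definition low_weight :: "(nat \<times> nat \<times> nat) set" where
  "low_weight = {(d1, d2, w). w \<le> 2 * (d1 + d2)}"

definition low_weight_refined :: "(nat \<times> nat \<times> nat) set" where
  "low_weight_refined = {(d1, d2, w). w < 2 * (d1 + d2)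
     \<or> (w = 2 * (d1 + d2) \<and> (d1 < 2 * d2 \<or> (d1 = 2 * d2 \<and> even d2)))}"

lemma low_weight_monoid:
  "0 \<in> low_weight" "x \<in> low_weight \<Longrightarrow> y \<in> low_weight \<Longrightarrow> x + y \<in> low_weight"
  by (auto simp: low_weight_def zero_prod_def)

lemma low_weight_refined_monoid:
  "0 \<in> low_weight_refined"
  "x \<in> low_weight_refined \<Longrightarrow> y \<in> low_weight_refined \<Longrightarrow> x + y \<in> low_weight_refined"
  by (auto simp: low_weight_refined_def zero_prod_def)

lemma low_weight_refined_subset: "low_weight_refined \<subseteq> low_weight"
  by (auto simp: low_weight_refined_def low_weight_def)

lemma eleven_homogeneous: "g \<in> eleven \<Longrightarrow> \<exists>d\<in>low_weight_refined. homogeneous d g"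
proof -
  have "{(1, 0, 1), (1, 1, 3), (2, 1, 5), (3, 1, 7), (2, 2, 8), (4, 1, 9), (3, 2, 10), (3, 3, 12),
         (4, 2, 12), (4, 3, 14), (5, 3, 16)} \<subseteq> low_weight_refined"
    by (simp add: low_weight_refined_def)
  then show "g \<in> eleven \<Longrightarrow> ?thesis"
    using homogeneous_f1' homogeneous_Lam3 homogeneous_Lam5 homogeneous_Lam7 homogeneous_M8
      homogeneous_Lam9 homogeneous_M10 homogeneous_N12 homogeneous_K12 homogeneous_H14 homogeneous_F16
    unfolding eleven_def by blast
qed

lemma X18_eleven_homogeneous: "g \<in> insert X18 eleven \<Longrightarrow> \<exists>d\<in>low_weight. homogeneous d g"
proof (cases "g = X18")
  case True
  have "(6, 3, 18) \<in> low_weight" by (simp add: low_weight_def)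
  then show ?thesis using True homogeneous_X18 by blast
next
  case False
  then show "g \<in> insert X18 eleven \<Longrightarrow> ?thesis"
    using eleven_homogeneous low_weight_refined_subset by blast
qed

theorem mainTheorem13:
  shows "f1' dvd A18 \<and> f1' dvd A19 \<and> A18 = f1' * X18 \<and> A19 = f1' * X19
     \<and> X18 \<notin> polys_in eleven \<and> X19 \<notin> polys_in (insert X18 eleven)"
proof -
  have A18: "A18 = f1' * X18" by (simp add: A18_factorization X18_formula)
  have A19: "A19 = f1' * X19" by (simp add: A19_factorization X19_formula)
  have "(6, 3, 18) \<notin> low_weight_refined" by (simp add: low_weight_refined_def)
  then have X18: "X18 \<notin> polys_in eleven"
    by (rule homogeneous_not_in_polys_in[OF homogeneous_X18 X18_nonzero _ low_weight_refined_monoid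
          eleven_homogeneous])
  have "(5, 4, 19) \<notin> low_weight" by (simp add: low_weight_def)
  then have X19: "X19 \<notin> polys_in (insert X18 eleven)"
    by (rule homogeneous_not_in_polys_in[OF homogeneous_X19 X19_nonzero _ low_weight_monoid
          X18_eleven_homogeneous])
  show ?thesis using A18 A19 X18 X19 by (auto intro: dvdI)
qed

end
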